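(* For MLAPD on a path of depth $D$ (the tree $\mathcal{T}$ is a path graph with $D$ nodes whose root $r$ is an endpoint), the online algorithm \textsc{Double} is $(4-2^{-D})$-competitive.
   Context: MLAPD: an instance is a rooted tree $\mathcal{T}$ with root $r$ and positive node costs $c(v)>0$, together with a set $\mathcal{R}$ of requests $\rho=(v,a,d)$ (node, arrival time, deadline $d\ge a$; deadlines distinct). A service $(S,t)$ is a subtree $S\ni r$ transmitted at time $t$, costing $c(S)=\sum_{u\in S}c(u)$; it satisfies $(v,a,d)$ if $v\in S$ and $a\le t\le d$. A feasible schedule satisfies every request; its cost is the sum of service costs. Online: requests revealed at arrival. $c$-competitive: cost at most $c$ times optimal on every instance. For request $\rho$ at $v$, $P_\rho$ is the set of nodes on the $r$–$v$ path; for a node set $S$, $c(r\to\gamma\mid S)=c(P_\gamma\setminus S)$. A request is pending at time $t$ if it has arrived by $t$ and was not satisfied by earlier transmissions. \textsc{Double}: when a pending request $\rho$ reaches its deadline $d_\rho$, set $S=P_\rho$; then repeat: if no pending request is unsatisfied by $S$, stop; otherwise let $\gamma$ be the pending request with earliest deadline not satisfied by $S$; if $c(S)+c(r\to\gamma\mid S)>2c(P_\rho)$ stop, else set $S\gets S\cup P_\gamma$. Finally transmit $(S,d_\rho)$. *)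

theory Defs
  imports Main "HOL.Real"
begin

text \<open>MLAPD on a path with D nodes 1..D; node 1 is the root (an endpoint),
  the parent of node i > 1 is i - 1.  A request is (node, arrival, deadline).\<close>

type_synonym request = "nat \<times> real \<times> real"
type_synonym service = "nat set \<times> real"

definition node :: "request \<Rightarrow> nat" where "node \<rho> = fst \<rho>"
definition arr :: "request \<Rightarrow> real" where "arr \<rho> = fst (snd \<rho>)"
definition dl :: "request \<Rightarrow> real" where "dl \<rho> = snd (snd \<rho>)"

definition rooted_subtree :: "nat \<Rightarrow> nat set \<Rightarrow> bool" where
  "rooted_subtree D S \<longleftrightarrow> S \<subseteq> {1..D} \<and> 1 \<in> S \<and> (\<forall>i\<in>S. 1 < i \<longrightarrow> i - 1 \<in> S)"

definition path_to :: "nat \<Rightarrow> nat set" where "path_to v = {1..v}"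

definition satisfies :: "service \<Rightarrow> request \<Rightarrow> bool" where
  "satisfies s \<rho> \<longleftrightarrow> node \<rho> \<in> fst s \<and> arr \<rho> \<le> snd s \<and> snd s \<le> dl \<rho>"

definition valid_instance :: "nat \<Rightarrow> (nat \<Rightarrow> real) \<Rightarrow> request set \<Rightarrow> bool" where
  "valid_instance D c R \<longleftrightarrow> 1 \<le> D \<and> (\<forall>i\<in>{1..D}. 0 < c i) \<and> finite R \<and>
     (\<forall>\<rho>\<in>R. node \<rho> \<in> {1..D} \<and> arr \<rho> \<le> dl \<rho>) \<and> inj_on dl R"

definition feasible :: "nat \<Rightarrow> request set \<Rightarrow> service list \<Rightarrow> bool" where
  "feasible D R sched \<longleftrightarrow> (\<forall>s\<in>set sched. rooted_subtree D (fst s)) \<and>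
     (\<forall>\<rho>\<in>R. \<exists>s\<in>set sched. satisfies s \<rho>)"

definition sched_cost :: "(nat \<Rightarrow> real) \<Rightarrow> service list \<Rightarrow> real" where
  "sched_cost c sched = (\<Sum>s\<leftarrow>sched. sum c (fst s))"

definition pending :: "request set \<Rightarrow> service list \<Rightarrow> real \<Rightarrow> request \<Rightarrow> bool" where
  "pending R tr t \<rho> \<longleftrightarrow> \<rho> \<in> R \<and> arr \<rho> \<le> t \<and> \<not> (\<exists>s\<in>set tr. snd s < t \<and> satisfies s \<rho>)"

text \<open>The growing loop of Double triggered by \<rho> (with a fuel bound, which is
  never exhausted since every iteration newly satisfies a request).\<close>
fun double_grow :: "(nat \<Rightarrow> real) \<Rightarrow> request set \<Rightarrow> service list \<Rightarrow> request \<Rightarrow> nat \<Rightarrow> nat set \<Rightarrow> nat set" where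
  "double_grow c R tr \<rho> 0 S = S"
| "double_grow c R tr \<rho> (Suc n) S =
     (let t = dl \<rho>; U = {\<gamma>. pending R tr t \<gamma> \<and> \<not> satisfies (S, t) \<gamma>} in
      if U = {} then S else
      (let \<gamma> = (THE \<gamma>. \<gamma> \<in> U \<and> (\<forall>\<delta>\<in>U. dl \<gamma> \<le> dl \<delta>)) in
       if sum c S + sum c (path_to (node \<gamma>) - S) > 2 * sum c (path_to (node \<rho>)) then S
       else double_grow c R tr \<rho> n (S \<union> path_to (node \<gamma>))))"

definition double_step :: "(nat \<Rightarrow> real) \<Rightarrow> request set \<Rightarrow> service list \<Rightarrow> request \<Rightarrow> service list" where
  "double_step c R tr \<rho> =
     (if pending R tr (dl \<rho>) \<rho>
      then tr @ [(double_grow c R tr \<rho> (card R + 1) (path_to (node \<rho>)), dl \<rho>)]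
      else tr)"

definition double :: "(nat \<Rightarrow> real) \<Rightarrow> request set \<Rightarrow> service list" where
  "double c R = foldl (double_step c R) []
     (map (\<lambda>d. THE \<rho>. \<rho> \<in> R \<and> dl \<rho> = d) (sorted_list_of_set (dl ` R)))"

end

theory Submission
  imports Defs
begin

(* Every transmission of Double triggered by a request \<rho> costs at most 2 c(P\<rho>).  If two
   triggering requests \<rho>1, \<rho>2 with d\<rho>1 < d\<rho>2 have overlapping lifetimes, then
   c(P\<rho>2) > 2 c(P\<rho>1): otherwise the request that stopped the growth of the transmission at d\<rho>1
   lies beyond \<rho>2 on the path, and the transmission serving it, strictly between the two
   deadlines, would already have served \<rho>2.  Now charge every triggering request to a
   transmission (X, t) of an arbitrary feasible schedule that serves it.  The requests charged
   to (X, t) have overlapping lifetimes, so their path costs are at most c(X) and pairwise differ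
   by a factor greater than 2; in particular they sit at distinct nodes, so there are k \<le> D of
   them.  Their geometric sum is at most (2 - 2^(1-k)) c(X), and Double pays at most twice this,
   i.e. at most (4 - 2^(-D)) c(X). *)

lemma sum_le_geometric:
  fixes f :: "'a \<Rightarrow> real"
  assumes "finite A" and "\<forall>x\<in>A. 0 \<le> f x \<and> f x \<le> M"
    and "\<forall>x\<in>A. \<forall>y\<in>A. x \<noteq> y \<longrightarrow> 2 * f x < f y \<or> 2 * f y < f x"
  shows "sum f A \<le> (2 - 2 / 2 ^ card A) * M"
  using assms
proof (induction "card A" arbitrary: A M)
  case 0
  then show ?case by simp
next
  case (Suc n)
  then have "A \<noteq> {}" by auto
  then have "Max (f ` A) \<in> f ` A" using Suc.prems(1) by simp
  then obtain x where x: "x \<in> A" "f x = Max (f ` A)" by auto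
  have fx: "0 \<le> f x" "f x \<le> M" using x Suc.prems(2) by auto
  have "f y \<le> f x / 2" if "y \<in> A - {x}" for y
  proof -
    have "f y \<le> f x" using that x Suc.prems(1) by simp
    moreover have "2 * f x < f y \<or> 2 * f y < f x" using that x(1) Suc.prems(3) by blast
    ultimately show ?thesis using fx by linarith
  qed
  moreover have "card (A - {x}) = n" using Suc.hyps(2) x by simp
  ultimately have IH: "sum f (A - {x}) \<le> (2 - 2 / 2 ^ n) * (f x / 2)"
    using Suc.hyps(1)[of "A - {x}" "f x / 2"] Suc.prems by auto
  have "sum f A = f x + sum f (A - {x})" using Suc.prems(1) x by (simp add: sum.remove)
  also have "\<dots> \<le> (2 - 2 / 2 ^ Suc n) * f x" using IH by (simp add: field_simps)
  also have "\<dots> \<le> (2 - 2 / 2 ^ Suc n) * M"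
  proof (rule mult_left_mono)
    have "(2::real) / 2 ^ Suc n \<le> 1" by (simp add: field_simps)
    then show "0 \<le> 2 - 2 / (2::real) ^ Suc n" by linarith
  qed (rule fx(2))
  finally show ?case using Suc.hyps(2) by simp
qed

lemma sum_Un_Diff:
  "finite A \<Longrightarrow> finite B \<Longrightarrow> sum f (A \<union> B) = sum f A + sum f (B - A)"
  by (metis Un_Diff_cancel finite_Diff sum.union_disjoint Diff_disjoint)

lemma rooted_subtree_path_to_subset:
  assumes "rooted_subtree D X" and "i \<in> X"
  shows "path_to i \<subseteq> X"
proof
  fix j assume "j \<in> path_to i"
  then have "j \<le> i" "1 \<le> j" by (auto simp: path_to_def)
  then show "j \<in> X"
  proof (induction j rule: inc_induct)
    case (step n)
    then show ?case using assms(1) unfolding rooted_subtree_def by fastforce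
  qed (rule assms(2))
qed

lemma rooted_subtree_interval: "1 \<le> m \<Longrightarrow> m \<le> D \<Longrightarrow> rooted_subtree D {1..m}"
  by (auto simp: rooted_subtree_def)

lemma the_earliest_deadline:
  assumes "finite U" and "inj_on dl U" and "U \<noteq> {}"
  defines "\<gamma> \<equiv> THE \<gamma>. \<gamma> \<in> U \<and> (\<forall>\<delta>\<in>U. dl \<gamma> \<le> dl \<delta>)"
  shows "\<gamma> \<in> U" and "\<forall>\<delta>\<in>U. dl \<gamma> \<le> dl \<delta>"
proof -
  have "Min (dl ` U) \<in> dl ` U" using assms(1,3) by simp
  then obtain g where g: "g \<in> U" "dl g = Min (dl ` U)" by auto
  then have "\<forall>\<delta>\<in>U. dl g \<le> dl \<delta>" using assms(1) by simp
  moreover have "y = g" if "y \<in> U" "\<forall>\<delta>\<in>U. dl y \<le> dl \<delta>" for y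
    using that g \<open>\<forall>\<delta>\<in>U. dl g \<le> dl \<delta>\<close> assms(2) by (meson inj_onD order_antisym)
  ultimately have "\<exists>!\<gamma>. \<gamma> \<in> U \<and> (\<forall>\<delta>\<in>U. dl \<gamma> \<le> dl \<delta>)" using g(1) by blast
  from theI'[OF this] show "\<gamma> \<in> U" and "\<forall>\<delta>\<in>U. dl \<gamma> \<le> dl \<delta>"
    unfolding \<gamma>_def by blast+
qed

lemma pending_append: "t \<le> snd s \<Longrightarrow> pending R (tr @ [s]) t = pending R tr t"
  by (auto simp: pending_def fun_eq_iff)

lemma double_grow_append:
  assumes "dl \<rho> \<le> snd s"
  shows "double_grow c R (tr @ [s]) \<rho> n S = double_grow c R tr \<rho> n S"
  by (induction n arbitrary: S) (simp_all only: double_grow.simps Let_def pending_append[OF assms])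

lemma double_grow_Suc:
  fixes R :: "request set" and tr :: "service list" and \<rho> :: request and S :: "nat set"
  defines "U \<equiv> {\<gamma>. pending R tr (dl \<rho>) \<gamma> \<and> \<not> satisfies (S, dl \<rho>) \<gamma>}"
  defines "\<gamma> \<equiv> THE \<gamma>. \<gamma> \<in> U \<and> (\<forall>\<delta>\<in>U. dl \<gamma> \<le> dl \<delta>)"
  shows "double_grow c R tr \<rho> (Suc n) S =
    (if U = {} \<or> 2 * sum c (path_to (node \<rho>)) < sum c S + sum c (path_to (node \<gamma>) - S) then S
     else double_grow c R tr \<rho> n (S \<union> path_to (node \<gamma>)))"
  by (simp only: double_grow.simps Let_def U_def[symmetric] \<gamma>_def[symmetric]) simp

declare double_grow.simps(2) [simp del]

definition double_service :: "(nat \<Rightarrow> real) \<Rightarrow> request set \<Rightarrow> service list \<Rightarrow> request \<Rightarrow> service" where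
  "double_service c R tr \<rho> = (double_grow c R tr \<rho> (card R + 1) (path_to (node \<rho>)), dl \<rho>)"

lemma double_step_eq:
  "double_step c R tr \<rho> = (if pending R tr (dl \<rho>) \<rho> then tr @ [double_service c R tr \<rho>] else tr)"
  by (simp only: double_step_def double_service_def)

lemma double_service_append:
  "dl \<rho> \<le> snd s \<Longrightarrow> double_service c R (tr @ [s]) \<rho> = double_service c R tr \<rho>"
  by (simp add: double_service_def double_grow_append)

lemma set_foldl_double_step:
  assumes "sorted_wrt (\<lambda>x y. dl x < dl y) xs"
  shows "distinct (foldl (double_step c R) [] xs) \<and>
    snd ` set (foldl (double_step c R) [] xs) \<subseteq> dl ` set xs \<and>
    set (foldl (double_step c R) [] xs) = double_service c R (foldl (double_step c R) [] xs) `
      {\<rho> \<in> set xs. pending R (foldl (double_step c R) [] xs) (dl \<rho>) \<rho>}"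
  using assms
proof (induction xs rule: rev_induct)
  case Nil
  show ?case by simp
next
  case (snoc x xs)
  define tr where "tr = foldl (double_step c R) [] xs"
  have earlier: "\<forall>y\<in>set xs. dl y < dl x" using snoc.prems by (simp add: sorted_wrt_append)
  have "sorted_wrt (\<lambda>x y. dl x < dl y) xs" using snoc.prems by (simp add: sorted_wrt_append)
  note IH = snoc.IH[OF this, folded tr_def]
  then have dist_tr: "distinct tr" and snd_tr: "snd ` set tr \<subseteq> dl ` set xs"
    and set_tr: "set tr = double_service c R tr ` {\<rho> \<in> set xs. pending R tr (dl \<rho>) \<rho>}"
    by blast+
  show ?case
  proof (cases "pending R tr (dl x) x")
    case True
    define s where "s = double_service c R tr x"
    have "foldl (double_step c R) [] (xs @ [x]) = double_step c R tr x" by (simp add: tr_def)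
    then have run: "foldl (double_step c R) [] (xs @ [x]) = tr @ [s]"
      by (simp add: double_step_eq True s_def)
    have later: "dl \<rho> \<le> snd s" if "\<rho> \<in> set (xs @ [x])" for \<rho>
      using that earlier by (auto simp: s_def double_service_def less_imp_le)
    have pend: "{\<rho> \<in> set (xs @ [x]). pending R (tr @ [s]) (dl \<rho>) \<rho>} =
        insert x {\<rho> \<in> set xs. pending R tr (dl \<rho>) \<rho>}"
      using later True by (auto simp: pending_append)
    have serv: "double_service c R (tr @ [s]) ` insert x {\<rho> \<in> set xs. pending R tr (dl \<rho>) \<rho>} =
        double_service c R tr ` insert x {\<rho> \<in> set xs. pending R tr (dl \<rho>) \<rho>}"
      by (rule image_cong) (auto simp: double_service_append later)
    have "snd s = dl x" by (simp add: s_def double_service_def)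
    then have "s \<notin> set tr" using snd_tr earlier by force
    then have "distinct (tr @ [s])" using dist_tr by simp
    moreover have "snd ` set (tr @ [s]) \<subseteq> dl ` set (xs @ [x])"
      using snd_tr \<open>snd s = dl x\<close> by auto
    moreover have "set (tr @ [s]) = double_service c R tr ` insert x {\<rho> \<in> set xs. pending R tr (dl \<rho>) \<rho>}"
      using set_tr by (simp add: s_def)
    ultimately show ?thesis unfolding run pend serv by blast
  next
    case False
    have "foldl (double_step c R) [] (xs @ [x]) = double_step c R tr x" by (simp add: tr_def)
    then have "foldl (double_step c R) [] (xs @ [x]) = tr" by (simp add: double_step_eq False)
    then show ?thesis using IH False by auto
  qed
qed

lemma double_eq_foldl_sorted:
  assumes "finite R" and "inj_on dl R"
  obtains rs where "set rs = R" and "sorted_wrt (\<lambda>x y. dl x < dl y) rs"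
    and "double c R = foldl (double_step c R) [] rs"
proof
  define rs where "rs = map (\<lambda>d. THE \<rho>. \<rho> \<in> R \<and> dl \<rho> = d) (sorted_list_of_set (dl ` R))"
  have the_req: "(THE \<rho>. \<rho> \<in> R \<and> dl \<rho> = dl \<rho>') = \<rho>'" if "\<rho>' \<in> R" for \<rho>'
    using that assms(2) by (intro the1_equality) (auto dest: inj_onD)
  have dl_rs: "map dl rs = sorted_list_of_set (dl ` R)"
    unfolding rs_def map_map using assms(1) by (intro map_idI) (auto simp: the_req)
  show "set rs = R"
    using assms(1) by (force simp: rs_def the_req)
  have "sorted_wrt (<) (map dl rs)" unfolding dl_rs by simp
  then show "sorted_wrt (\<lambda>x y. dl x < dl y) rs" by (simp add: sorted_wrt_map)
  show "double c R = foldl (double_step c R) [] rs" by (simp add: double_def rs_def)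
qed

locale mlapd_path =
  fixes D :: nat and c :: "nat \<Rightarrow> real" and R :: "request set"
  assumes valid: "valid_instance D c R"
begin

lemma finite_R: "finite R"
  and cost_pos: "i \<in> {1..D} \<Longrightarrow> 0 < c i"
  and node_in_range: "\<rho> \<in> R \<Longrightarrow> node \<rho> \<in> {1..D}"
  and arr_le_dl: "\<rho> \<in> R \<Longrightarrow> arr \<rho> \<le> dl \<rho>"
  and inj_on_dl: "inj_on dl R"
  using valid by (auto simp: valid_instance_def)

abbreviation path_cost :: "nat \<Rightarrow> real" where
  "path_cost v \<equiv> sum c (path_to v)"

lemma sum_cost_mono: "X \<subseteq> Y \<Longrightarrow> Y \<subseteq> {1..D} \<Longrightarrow> sum c X \<le> sum c Y"
proof (rule sum_mono2)
  assume "X \<subseteq> Y" "Y \<subseteq> {1..D}"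
  then show "finite Y" and "X \<subseteq> Y" by (auto intro: finite_subset)
  show "0 \<le> c b" if "b \<in> Y - X" for b
    using that \<open>Y \<subseteq> {1..D}\<close> cost_pos by (meson DiffD1 less_imp_le subsetD)
qed

lemma sum_cost_nonneg: "X \<subseteq> {1..D} \<Longrightarrow> 0 \<le> sum c X"
  using sum_cost_mono[of "{}" X] by simp

lemma path_cost_mono: "u \<le> v \<Longrightarrow> v \<le> D \<Longrightarrow> path_cost u \<le> path_cost v"
  by (rule sum_cost_mono) (auto simp: path_to_def)

lemma the_earliest_deadline_in_R:
  assumes "U \<subseteq> R" and "U \<noteq> {}"
  shows "(THE \<gamma>. \<gamma> \<in> U \<and> (\<forall>\<delta>\<in>U. dl \<gamma> \<le> dl \<delta>)) \<in> U"
    and "\<forall>\<delta>\<in>U. dl (THE \<gamma>. \<gamma> \<in> U \<and> (\<forall>\<delta>\<in>U. dl \<gamma> \<le> dl \<delta>)) \<le> dl \<delta>"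
  using the_earliest_deadline[OF finite_subset[OF assms(1) finite_R] inj_on_subset[OF inj_on_dl assms(1)] assms(2)]
  by blast+

lemma double_grow_interval:
  assumes "1 \<le> m" and "m \<le> D" and "sum c {1..m} \<le> 2 * path_cost (node \<rho>)"
  shows "\<exists>m'. double_grow c R tr \<rho> n {1..m} = {1..m'} \<and> m \<le> m' \<and> m' \<le> D \<and>
    sum c {1..m'} \<le> 2 * path_cost (node \<rho>)"
  using assms
proof (induction n arbitrary: m)
  case 0
  then show ?case by auto
next
  case (Suc n)
  define U where "U = {\<gamma>. pending R tr (dl \<rho>) \<gamma> \<and> \<not> satisfies ({1..m}, dl \<rho>) \<gamma>}"
  define \<gamma> where "\<gamma> = (THE \<gamma>. \<gamma> \<in> U \<and> (\<forall>\<delta>\<in>U. dl \<gamma> \<le> dl \<delta>))"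
  show ?case
  proof (cases "U = {} \<or> 2 * path_cost (node \<rho>) < sum c {1..m} + sum c (path_to (node \<gamma>) - {1..m})")
    case True
    then show ?thesis using Suc.prems by (auto simp: double_grow_Suc U_def \<gamma>_def)
  next
    case False
    have "U \<subseteq> R" by (auto simp: U_def pending_def)
    then have "\<gamma> \<in> U" using the_earliest_deadline_in_R(1) False unfolding \<gamma>_def by blast
    then have "node \<gamma> \<in> {1..D}" using \<open>U \<subseteq> R\<close> node_in_range by blast
    moreover have extended: "{1..m} \<union> path_to (node \<gamma>) = {1..max m (node \<gamma>)}"
      by (auto simp: path_to_def)
    moreover have "sum c ({1..m} \<union> path_to (node \<gamma>)) \<le> 2 * path_cost (node \<rho>)"
      using False by (simp add: sum_Un_Diff path_to_def)
    ultimately have "1 \<le> max m (node \<gamma>)" "max m (node \<gamma>) \<le> D"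
      "sum c {1..max m (node \<gamma>)} \<le> 2 * path_cost (node \<rho>)"
      using Suc.prems by auto
    from Suc.IH[OF this] obtain m' where "double_grow c R tr \<rho> n {1..max m (node \<gamma>)} = {1..m'}"
      "max m (node \<gamma>) \<le> m'" "m' \<le> D" "sum c {1..m'} \<le> 2 * path_cost (node \<rho>)"
      by blast
    then show ?thesis using False extended by (auto simp: double_grow_Suc U_def \<gamma>_def)
  qed
qed

lemma extension_shrinks_unsatisfied:
  assumes no_overdue: "\<forall>\<delta>. pending R tr (dl \<rho>) \<delta> \<longrightarrow> dl \<rho> \<le> dl \<delta>"
    and "pending R tr (dl \<rho>) g" and "\<not> satisfies ({1..m}, dl \<rho>) g" and "1 \<le> node g"
  shows "card {\<delta>. pending R tr (dl \<rho>) \<delta> \<and> \<not> satisfies ({1..max m (node g)}, dl \<rho>) \<delta>}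
    < card {\<delta>. pending R tr (dl \<rho>) \<delta> \<and> \<not> satisfies ({1..m}, dl \<rho>) \<delta>}"
proof (rule psubset_card_mono)
  show "finite {\<delta>. pending R tr (dl \<rho>) \<delta> \<and> \<not> satisfies ({1..m}, dl \<rho>) \<delta>}"
    using finite_R by (rule finite_subset[rotated]) (auto simp: pending_def)
  have "dl \<rho> \<le> dl g" using no_overdue assms(2) by blast
  then have "satisfies ({1..max m (node g)}, dl \<rho>) g"
    using assms(2,4) by (auto simp: satisfies_def pending_def)
  then show "{\<delta>. pending R tr (dl \<rho>) \<delta> \<and> \<not> satisfies ({1..max m (node g)}, dl \<rho>) \<delta>}
    \<subset> {\<delta>. pending R tr (dl \<rho>) \<delta> \<and> \<not> satisfies ({1..m}, dl \<rho>) \<delta>}"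
    using assms(2,3) by (auto simp: satisfies_def)
qed

lemma double_grow_exceeds_budget:
  assumes no_overdue: "\<forall>\<delta>. pending R tr (dl \<rho>) \<delta> \<longrightarrow> dl \<rho> \<le> dl \<delta>"
    and "1 \<le> m" and "m \<le> D"
    and "card {\<delta>. pending R tr (dl \<rho>) \<delta> \<and> \<not> satisfies ({1..m}, dl \<rho>) \<delta>} < n"
    and "pending R tr (dl \<rho>) \<gamma>" and "\<not> satisfies (double_grow c R tr \<rho> n {1..m}, dl \<rho>) \<gamma>"
  shows "\<exists>\<gamma>'. pending R tr (dl \<rho>) \<gamma>' \<and> \<not> satisfies (double_grow c R tr \<rho> n {1..m}, dl \<rho>) \<gamma>' \<and>
    dl \<gamma>' \<le> dl \<gamma> \<and> 2 * path_cost (node \<rho>) <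
      sum c (double_grow c R tr \<rho> n {1..m}) + sum c (path_to (node \<gamma>') - double_grow c R tr \<rho> n {1..m})"
  using assms(2-)
proof (induction n arbitrary: m)
  case 0
  then show ?case by simp
next
  case (Suc n)
  define U where "U = {\<delta>. pending R tr (dl \<rho>) \<delta> \<and> \<not> satisfies ({1..m}, dl \<rho>) \<delta>}"
  define g where "g = (THE \<gamma>. \<gamma> \<in> U \<and> (\<forall>\<delta>\<in>U. dl \<gamma> \<le> dl \<delta>))"
  have "U \<subseteq> R" by (auto simp: U_def pending_def)
  have step: "double_grow c R tr \<rho> (Suc n) {1..m} =
    (if U = {} \<or> 2 * path_cost (node \<rho>) < sum c {1..m} + sum c (path_to (node g) - {1..m}) then {1..m}
     else double_grow c R tr \<rho> n ({1..m} \<union> path_to (node g)))"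
    by (simp only: double_grow_Suc U_def g_def)
  show ?case
  proof (cases "U = {}")
    case True
    then have "double_grow c R tr \<rho> (Suc n) {1..m} = {1..m}" unfolding step by simp
    then have "\<gamma> \<in> U" using Suc.prems(4,5) by (simp add: U_def)
    then show ?thesis using True by simp
  next
    case False
    have "g \<in> U" and g_earliest: "\<forall>\<delta>\<in>U. dl g \<le> dl \<delta>"
      using the_earliest_deadline_in_R[OF \<open>U \<subseteq> R\<close> False] by (simp_all add: g_def)
    show ?thesis
    proof (cases "2 * path_cost (node \<rho>) < sum c {1..m} + sum c (path_to (node g) - {1..m})")
      case over_budget: True
      then have stop: "double_grow c R tr \<rho> (Suc n) {1..m} = {1..m}" unfolding step by simp
      then have "\<gamma> \<in> U" using Suc.prems(4,5) by (simp add: U_def)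
      then have "dl g \<le> dl \<gamma>" using g_earliest by blast
      then show ?thesis using \<open>g \<in> U\<close> over_budget unfolding stop
        by (intro exI[of _ g]) (auto simp: U_def)
    next
      case within_budget: False
      have "node g \<in> {1..D}" using \<open>g \<in> U\<close> \<open>U \<subseteq> R\<close> node_in_range by blast
      have extended: "{1..m} \<union> path_to (node g) = {1..max m (node g)}" by (auto simp: path_to_def)
      have "card {\<delta>. pending R tr (dl \<rho>) \<delta> \<and> \<not> satisfies ({1..max m (node g)}, dl \<rho>) \<delta>} < card U"
        using extension_shrinks_unsatisfied[OF no_overdue] \<open>g \<in> U\<close> \<open>node g \<in> {1..D}\<close>
        by (simp add: U_def)
      then have "card {\<delta>. pending R tr (dl \<rho>) \<delta> \<and> \<not> satisfies ({1..max m (node g)}, dl \<rho>) \<delta>} < n"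
        using Suc.prems(3) unfolding U_def by linarith
      moreover have cont: "double_grow c R tr \<rho> (Suc n) {1..m} = double_grow c R tr \<rho> n {1..max m (node g)}"
        unfolding step extended using False within_budget by simp
      ultimately show ?thesis
        unfolding cont using Suc.prems cont \<open>node g \<in> {1..D}\<close> by (intro Suc.IH) auto
    qed
  qed
qed

definition triggers :: "request set" where
  "triggers = {\<rho> \<in> R. pending R (double c R) (dl \<rho>) \<rho>}"

(* Defined with the complete run rather than the trace at time dl \<rho>; the two agree because
   later transmissions happen no earlier than dl \<rho> (double_grow_append). *)
definition grown :: "request \<Rightarrow> nat set" where
  "grown \<rho> = double_grow c R (double c R) \<rho> (card R + 1) (path_to (node \<rho>))"

lemma triggers_subset: "triggers \<subseteq> R"
  by (simp add: triggers_def)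

lemma set_double: "distinct (double c R)" "set (double c R) = (\<lambda>\<rho>. (grown \<rho>, dl \<rho>)) ` triggers"
proof -
  obtain rs where set_rs: "set rs = R" and sorted: "sorted_wrt (\<lambda>x y. dl x < dl y) rs"
    and run: "double c R = foldl (double_step c R) [] rs"
    using double_eq_foldl_sorted[OF finite_R inj_on_dl] .
  have "double_service c R (double c R) = (\<lambda>\<rho>. (grown \<rho>, dl \<rho>))"
    by (simp add: fun_eq_iff double_service_def grown_def)
  with set_foldl_double_step[OF sorted, of c R]
  show "distinct (double c R)" "set (double c R) = (\<lambda>\<rho>. (grown \<rho>, dl \<rho>)) ` triggers"
    unfolding run[symmetric] set_rs triggers_def by simp_all
qed

lemma grown_interval:
  assumes "\<rho> \<in> R"
  shows "\<exists>m. grown \<rho> = {1..m} \<and> node \<rho> \<le> m \<and> m \<le> D \<and> sum c (grown \<rho>) \<le> 2 * path_cost (node \<rho>)"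
proof -
  have "1 \<le> node \<rho>" "node \<rho> \<le> D" using node_in_range[OF assms] by auto
  moreover have "0 \<le> path_cost (node \<rho>)" using \<open>node \<rho> \<le> D\<close> by (intro sum_cost_nonneg) (auto simp: path_to_def)
  ultimately obtain m where "grown \<rho> = {1..m}" "node \<rho> \<le> m" "m \<le> D"
    "sum c {1..m} \<le> 2 * path_cost (node \<rho>)"
    using double_grow_interval[of "node \<rho>" \<rho> "double c R" "card R + 1"]
    unfolding grown_def path_to_def by auto
  then show ?thesis by auto
qed

lemma rooted_subtree_grown:
  assumes "\<rho> \<in> R"
  shows "rooted_subtree D (grown \<rho>)"
proof -
  obtain m where "grown \<rho> = {1..m}" "node \<rho> \<le> m" "m \<le> D" using grown_interval[OF assms] by blast
  moreover have "1 \<le> node \<rho>" using node_in_range[OF assms] by simp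
  ultimately show ?thesis using rooted_subtree_interval by simp
qed

lemma satisfies_grown:
  assumes "\<rho> \<in> R"
  shows "satisfies (grown \<rho>, dl \<rho>) \<rho>"
proof -
  obtain m where "grown \<rho> = {1..m}" "node \<rho> \<le> m" using grown_interval[OF assms] by blast
  then show ?thesis using node_in_range[OF assms] arr_le_dl[OF assms] by (simp add: satisfies_def)
qed

lemma double_serves_by_deadline:
  assumes "\<rho> \<in> R"
  shows "\<exists>s\<in>set (double c R). snd s \<le> dl \<rho> \<and> satisfies s \<rho>"
proof (cases "\<rho> \<in> triggers")
  case True
  then have "(grown \<rho>, dl \<rho>) \<in> set (double c R)" using set_double(2) by simp
  then show ?thesis using satisfies_grown[OF assms] by (intro bexI[of _ "(grown \<rho>, dl \<rho>)"]) auto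
next
  case False
  then have "\<exists>s\<in>set (double c R). snd s < dl \<rho> \<and> satisfies s \<rho>"
    using assms arr_le_dl[OF assms] by (simp add: triggers_def pending_def)
  then show ?thesis by (meson less_imp_le)
qed

lemma feasible_double: "feasible D R (double c R)"
  unfolding feasible_def
proof
  show "\<forall>s\<in>set (double c R). rooted_subtree D (fst s)"
    using set_double(2) triggers_subset rooted_subtree_grown by auto
  show "\<forall>\<rho>\<in>R. \<exists>s\<in>set (double c R). satisfies s \<rho>"
    using double_serves_by_deadline by blast
qed

lemma pending_double_not_overdue:
  assumes "pending R (double c R) t \<gamma>"
  shows "t \<le> dl \<gamma>"
proof (rule ccontr)
  assume "\<not> t \<le> dl \<gamma>"
  moreover obtain s where "s \<in> set (double c R)" "snd s \<le> dl \<gamma>" "satisfies s \<gamma>"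
    using assms double_serves_by_deadline[of \<gamma>] by (auto simp: pending_def)
  ultimately show False using assms by (auto simp: pending_def)
qed

lemma grown_exceeds_budget:
  assumes "\<rho> \<in> R" and "pending R (double c R) (dl \<rho>) \<gamma>" and "\<not> satisfies (grown \<rho>, dl \<rho>) \<gamma>"
  shows "\<exists>\<gamma>'. pending R (double c R) (dl \<rho>) \<gamma>' \<and> \<not> satisfies (grown \<rho>, dl \<rho>) \<gamma>' \<and>
    dl \<gamma>' \<le> dl \<gamma> \<and> 2 * path_cost (node \<rho>) < path_cost (node \<gamma>')"
proof -
  have "{\<delta>. pending R (double c R) (dl \<rho>) \<delta> \<and> \<not> satisfies ({1..node \<rho>}, dl \<rho>) \<delta>} \<subseteq> R"
    by (auto simp: pending_def)
  then have "card {\<delta>. pending R (double c R) (dl \<rho>) \<delta> \<and> \<not> satisfies ({1..node \<rho>}, dl \<rho>) \<delta>} < card R + 1"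
    using finite_R by (simp add: card_mono le_imp_less_Suc)
  then obtain \<gamma>' where \<gamma>': "pending R (double c R) (dl \<rho>) \<gamma>'" "\<not> satisfies (grown \<rho>, dl \<rho>) \<gamma>'"
    "dl \<gamma>' \<le> dl \<gamma>" "2 * path_cost (node \<rho>) < sum c (grown \<rho>) + sum c (path_to (node \<gamma>') - grown \<rho>)"
    using double_grow_exceeds_budget[of "double c R" \<rho> "node \<rho>" "card R + 1" \<gamma>] assms
      node_in_range[OF assms(1)] pending_double_not_overdue
    unfolding grown_def path_to_def by auto
  obtain m where m: "grown \<rho> = {1..m}" using grown_interval[OF assms(1)] by blast
  have "\<gamma>' \<in> R" using \<gamma>'(1) by (simp add: pending_def)
  have "m < node \<gamma>'"
    using \<gamma>'(1,2) pending_double_not_overdue[OF \<gamma>'(1)] node_in_range[OF \<open>\<gamma>' \<in> R\<close>]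
    by (auto simp: m satisfies_def pending_def)
  then have "grown \<rho> \<subseteq> path_to (node \<gamma>')" by (auto simp: m path_to_def)
  then have "path_cost (node \<gamma>') = sum c (path_to (node \<gamma>') - grown \<rho>) + sum c (grown \<rho>)"
    by (rule sum.subset_diff) (simp add: path_to_def)
  then show ?thesis using \<gamma>' by (intro exI[of _ \<gamma>']) auto
qed

lemma triggers_doubling:
  assumes trig1: "\<rho>1 \<in> triggers" and trig2: "\<rho>2 \<in> triggers"
    and "dl \<rho>1 < dl \<rho>2" and "arr \<rho>2 \<le> dl \<rho>1"
  shows "2 * path_cost (node \<rho>1) < path_cost (node \<rho>2)"
proof (rule ccontr)
  assume small: "\<not> 2 * path_cost (node \<rho>1) < path_cost (node \<rho>2)"
  have "\<rho>1 \<in> R" "\<rho>2 \<in> R" using trig1 trig2 triggers_subset by auto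
  have pend2: "pending R (double c R) (dl \<rho>2) \<rho>2" using trig2 by (simp add: triggers_def)
  have "pending R (double c R) (dl \<rho>1) \<rho>2"
    using pend2 \<open>dl \<rho>1 < dl \<rho>2\<close> \<open>arr \<rho>2 \<le> dl \<rho>1\<close> unfolding pending_def by force
  moreover have "\<not> satisfies (grown \<rho>1, dl \<rho>1) \<rho>2"
  proof
    assume "satisfies (grown \<rho>1, dl \<rho>1) \<rho>2"
    moreover have "(grown \<rho>1, dl \<rho>1) \<in> set (double c R)" using trig1 set_double(2) by simp
    ultimately show False using pend2 \<open>dl \<rho>1 < dl \<rho>2\<close> unfolding pending_def by force
  qed
  ultimately obtain \<gamma> where \<gamma>: "pending R (double c R) (dl \<rho>1) \<gamma>" "\<not> satisfies (grown \<rho>1, dl \<rho>1) \<gamma>"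
    "dl \<gamma> \<le> dl \<rho>2" "2 * path_cost (node \<rho>1) < path_cost (node \<gamma>)"
    using grown_exceeds_budget[OF \<open>\<rho>1 \<in> R\<close>] by blast
  have "\<gamma> \<in> R" using \<gamma>(1) by (simp add: pending_def)
  have "node \<rho>2 < node \<gamma>"
    using \<gamma>(4) small path_cost_mono[of "node \<gamma>" "node \<rho>2"] node_in_range[OF \<open>\<rho>2 \<in> R\<close>]
    by (meson atLeastAtMost_iff not_less order.strict_trans1)
  then have "dl \<gamma> < dl \<rho>2"
    using \<gamma>(3) inj_on_dl \<open>\<gamma> \<in> R\<close> \<open>\<rho>2 \<in> R\<close> by (metis inj_onD order_le_imp_less_or_eq less_irrefl)
  obtain s where s: "s \<in> set (double c R)" "snd s \<le> dl \<gamma>" "satisfies s \<gamma>"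
    using double_serves_by_deadline[OF \<open>\<gamma> \<in> R\<close>] by blast
  have "dl \<rho>1 \<le> snd s"
    using \<gamma>(1) s unfolding pending_def by force
  moreover have "snd s \<noteq> dl \<rho>1"
  proof
    assume "snd s = dl \<rho>1"
    obtain \<rho> where "\<rho> \<in> triggers" "s = (grown \<rho>, dl \<rho>)" using s(1) set_double(2) by auto
    then have "\<rho> = \<rho>1"
      using \<open>snd s = dl \<rho>1\<close> trig1 triggers_subset inj_on_dl by (auto dest: inj_onD)
    then show False using \<open>s = (grown \<rho>, dl \<rho>)\<close> s(3) \<gamma>(2) by simp
  qed
  moreover have "node \<rho>2 \<in> fst s"
  proof -
    have "rooted_subtree D (fst s)" using s(1) feasible_double by (simp add: feasible_def)
    then have "path_to (node \<gamma>) \<subseteq> fst s"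
      using s(3) by (intro rooted_subtree_path_to_subset) (auto simp: satisfies_def)
    then show ?thesis
      using \<open>node \<rho>2 < node \<gamma>\<close> node_in_range[OF \<open>\<rho>2 \<in> R\<close>] by (auto simp: path_to_def)
  qed
  ultimately have "satisfies s \<rho>2" and "snd s < dl \<rho>2"
    using s(2) \<open>dl \<gamma> < dl \<rho>2\<close> \<open>arr \<rho>2 \<le> dl \<rho>1\<close> by (auto simp: satisfies_def)
  then show False using pend2 s(1) unfolding pending_def by blast
qed

lemma cost_double_le: "sched_cost c (double c R) \<le> (\<Sum>\<rho>\<in>triggers. 2 * path_cost (node \<rho>))"
proof -
  have "inj_on (\<lambda>\<rho>. (grown \<rho>, dl \<rho>)) triggers"
    using inj_on_dl triggers_subset by (auto simp: inj_on_def)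
  then have "sched_cost c (double c R) = (\<Sum>\<rho>\<in>triggers. sum c (grown \<rho>))"
    unfolding sched_cost_def using set_double by (simp add: sum_list_distinct_conv_sum_set sum.reindex)
  also have "\<dots> \<le> (\<Sum>\<rho>\<in>triggers. 2 * path_cost (node \<rho>))"
    using grown_interval triggers_subset by (intro sum_mono) blast
  finally show ?thesis .
qed

lemma triggers_served_together:
  assumes "rooted_subtree D X" and "A \<subseteq> triggers" and "\<forall>\<rho>\<in>A. satisfies (X, t) \<rho>"
  shows "(\<Sum>\<rho>\<in>A. 2 * path_cost (node \<rho>)) \<le> (4 - 1 / 2 ^ D) * sum c X"
proof -
  have "X \<subseteq> {1..D}" using assms(1) by (simp add: rooted_subtree_def)
  have "A \<subseteq> R" using assms(2) triggers_subset by blast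
  then have "finite A" using finite_R finite_subset by blast
  have bounded: "\<forall>\<rho>\<in>A. 0 \<le> path_cost (node \<rho>) \<and> path_cost (node \<rho>) \<le> sum c X"
  proof
    fix \<rho> assume "\<rho> \<in> A"
    then have "path_to (node \<rho>) \<subseteq> X"
      using assms(1,3) rooted_subtree_path_to_subset by (simp add: satisfies_def)
    then show "0 \<le> path_cost (node \<rho>) \<and> path_cost (node \<rho>) \<le> sum c X"
      using \<open>X \<subseteq> {1..D}\<close> sum_cost_nonneg sum_cost_mono by (meson order.trans)
  qed
  have doubling: "\<forall>x\<in>A. \<forall>y\<in>A. x \<noteq> y \<longrightarrow>
      2 * path_cost (node x) < path_cost (node y) \<or> 2 * path_cost (node y) < path_cost (node x)"
  proof (intro ballI impI)
    fix x y assume "x \<in> A" "y \<in> A" "x \<noteq> y"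
    have "satisfies (X, t) x" "satisfies (X, t) y" using assms(3) \<open>x \<in> A\<close> \<open>y \<in> A\<close> by blast+
    then have "arr y \<le> dl x" "arr x \<le> dl y" by (auto simp: satisfies_def)
    moreover have "dl x \<noteq> dl y"
      using \<open>x \<in> A\<close> \<open>y \<in> A\<close> \<open>x \<noteq> y\<close> inj_on_dl \<open>A \<subseteq> R\<close> by (meson inj_onD subsetD)
    ultimately show "2 * path_cost (node x) < path_cost (node y) \<or> 2 * path_cost (node y) < path_cost (node x)"
      using triggers_doubling[of x y] triggers_doubling[of y x] \<open>x \<in> A\<close> \<open>y \<in> A\<close> assms(2)
      by (meson linorder_neqE_linordered_idom subsetD)
  qed
  have "card A \<le> D"
  proof -
    have "inj_on node A"
      using doubling bounded by (intro inj_onI) force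
    moreover have "node ` A \<subseteq> {1..D}" using \<open>A \<subseteq> R\<close> node_in_range by blast
    ultimately show ?thesis using card_inj_on_le[of node A "{1..D}"] by simp
  qed
  then have "1 / (2::real) ^ D \<le> 4 / 2 ^ card A"
    by (simp add: frac_le power_increasing)
  have "(\<Sum>\<rho>\<in>A. 2 * path_cost (node \<rho>)) = 2 * (\<Sum>\<rho>\<in>A. path_cost (node \<rho>))"
    by (simp add: sum_distrib_left)
  also have "\<dots> \<le> 2 * ((2 - 2 / 2 ^ card A) * sum c X)"
    using sum_le_geometric[OF \<open>finite A\<close> bounded doubling] by simp
  also have "\<dots> = (4 - 4 / 2 ^ card A) * sum c X" by (simp add: algebra_simps)
  also have "\<dots> \<le> (4 - 1 / 2 ^ D) * sum c X"
    using \<open>1 / 2 ^ D \<le> 4 / 2 ^ card A\<close> sum_cost_nonneg[OF \<open>X \<subseteq> {1..D}\<close>]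
    by (intro mult_right_mono) auto
  finally show ?thesis .
qed

lemma double_competitive:
  assumes "feasible D R sched"
  shows "sched_cost c (double c R) \<le> (4 - 1 / 2 ^ D) * sched_cost c sched"
proof -
  have "\<forall>\<rho>\<in>triggers. \<exists>i. i < length sched \<and> satisfies (sched ! i) \<rho>"
    using assms triggers_subset unfolding feasible_def by (metis in_set_conv_nth subsetD)
  then obtain f where f: "\<forall>\<rho>\<in>triggers. f \<rho> < length sched \<and> satisfies (sched ! f \<rho>) \<rho>"
    by metis
  have "finite triggers" using finite_R triggers_subset finite_subset by blast
  have "sched_cost c (double c R) \<le> (\<Sum>\<rho>\<in>triggers. 2 * path_cost (node \<rho>))"
    by (rule cost_double_le)
  also have "\<dots> = (\<Sum>i<length sched. \<Sum>\<rho>\<in>{\<rho>\<in>triggers. f \<rho> = i}. 2 * path_cost (node \<rho>))"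
    using \<open>finite triggers\<close> f by (intro sum.group[symmetric]) auto
  also have "\<dots> \<le> (\<Sum>i<length sched. (4 - 1 / 2 ^ D) * sum c (fst (sched ! i)))"
  proof (rule sum_mono)
    fix i assume "i \<in> {..<length sched}"
    then have "rooted_subtree D (fst (sched ! i))" using assms unfolding feasible_def by simp
    moreover have "\<forall>\<rho>\<in>{\<rho>\<in>triggers. f \<rho> = i}. satisfies (fst (sched ! i), snd (sched ! i)) \<rho>"
      using f by auto
    ultimately show "(\<Sum>\<rho>\<in>{\<rho>\<in>triggers. f \<rho> = i}. 2 * path_cost (node \<rho>)) \<le>
        (4 - 1 / 2 ^ D) * sum c (fst (sched ! i))"
      by (intro triggers_served_together[where t = "snd (sched ! i)"]) auto
  qed
  also have "\<dots> = (4 - 1 / 2 ^ D) * sched_cost c sched"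
    by (simp add: sched_cost_def sum_list_sum_nth atLeast0LessThan sum_distrib_left)
  finally show ?thesis .
qed

end

theorem mainTheorem3:
  fixes D :: nat and c :: "nat \<Rightarrow> real" and R :: "request set"
  assumes "valid_instance D c R"
  shows "feasible D R (double c R) \<and>
         (\<forall>sched. feasible D R sched \<longrightarrow>
            sched_cost c (double c R) \<le> (4 - 1 / 2 ^ D) * sched_cost c sched)"
proof -
  interpret mlapd_path D c R by (rule mlapd_path.intro) (fact assms)
  show ?thesis using feasible_double double_competitive by blast
qed

end
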